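(* Let $\Omega\subset\mathbb{R}^N$ ($N\ge3$) be a bounded domain with smooth boundary, $2^*=\frac{2N}{N-2}$, $\alpha,\beta>1$, $1<q<2<\alpha+\beta<2^*$, $\lambda,\mu>0$, $a,b,c,h_1,h_2:\Omega\to\mathbb{R}$ continuous with $a,c\in L^{\frac{\alpha+\beta}{\alpha+\beta-q}}(\Omega)$ and $h_1,h_2\in L^2(\Omega)$, and $\phi_1,\phi_2:[0,+\infty)\to\mathbb{R}$ continuous. Assume $(\phi_1)$ and $(B)$ hold. Then there exists $(\omega_1,\omega_2)\in W$ with $\|(\omega_1,\omega_2)\|>\rho_{\lambda,\mu}$ and $J_{\lambda,\mu}(\omega_1,\omega_2)<0$, where $\rho_{\lambda,\mu}=t_{\lambda,\mu}$.
   Context: $\Phi_i(s)=\int_0^s\phi_i(\tau)\,d\tau$ ($i=1,2$). $(\phi_1)$: there are constants $0<\rho_0\le\rho_1$ with $\rho_0\le\phi_i(s)\le\rho_1$ for all $s\ge0$, $i=1,2$. $(B)$: $b\in L^\infty(\Omega)$ and $b>0$ on some nonempty open $\Omega_1\subset\Omega$. $W=H_0^1(\Omega)\times H_0^1(\Omega)$ with norm $\|(u,v)\|=\left(\int_\Omega(|\nabla u|^2+|\nabla v|^2)dx\right)^{1/2}$; $\|\cdot\|_p$ is the $L^p(\Omega)$ norm; $S_i$ ($1<i<2^*$) is the smallest constant with $\|u\|_i\le S_i\|\nabla u\|_2$ on $H_0^1(\Omega)$. $J_{\lambda,\mu}(u,v)=\int_\Omega\left[\Phi_1\left(\frac{u^2+|\nabla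 u|^2}{2}\right)+\Phi_2\left(\frac{v^2+|\nabla v|^2}{2}\right)\right]dx-\frac1q\int_\Omega(\lambda a|u|^q+\mu c|v|^q)dx-\frac{1}{\alpha+\beta}\int_\Omega b|u|^\alpha|v|^\beta dx-\int_\Omega h_1u\,dx-\int_\Omega h_2v\,dx$. $K=\max\{\|a\|_{\frac{\alpha+\beta}{\alpha+\beta-q}},\|c\|_{\frac{\alpha+\beta}{\alpha+\beta-q}}\}$, $\alpha_0=\frac{(2-q)(\alpha+\beta)K}{q(\alpha+\beta-2)\|b\|_\infty S_{\alpha+\beta}^{\alpha+\beta-q}}$, $t_{\lambda,\mu}=(\lambda+\mu)^{\frac{1}{\alpha+\beta-q}}\alpha_0^{\frac{1}{\alpha+\beta-q}}$. *)

theory Defs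
  imports "HOL-Analysis.Analysis" "HOL-Probability.Essential_Supremum"
begin

definition smooth_on :: "'a::euclidean_space set \<Rightarrow> ('a \<Rightarrow> real) \<Rightarrow> bool" where
  "smooth_on U f \<longleftrightarrow> (\<exists>F. f \<in> F \<and>
     (\<forall>g\<in>F. continuous_on U g \<and>
        (\<forall>i\<in>Basis. \<exists>g'\<in>F. \<forall>x\<in>U.
            ((\<lambda>t. g (x + t *\<^sub>R i)) has_real_derivative g' x) (at 0))))"

definition grad :: "('a::euclidean_space \<Rightarrow> real) \<Rightarrow> 'a \<Rightarrow> 'a" where
  "grad f x = (\<Sum>i\<in>Basis. frechet_derivative f (at x) i *\<^sub>R i)"

definition smooth_bounded_domain :: "'a::euclidean_space set \<Rightarrow> bool" where
  "smooth_bounded_domain \<Omega> \<longleftrightarrow> open \<Omega> \<and> connected \<Omega> \<and> bounded \<Omega> \<and> \<Omega> \<noteq> {} \<and>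
     (\<forall>x\<in>frontier \<Omega>. \<exists>U r. open U \<and> x \<in> U \<and> smooth_on U r \<and>
        \<Omega> \<inter> U = {y\<in>U. r y < 0} \<and> grad r x \<noteq> 0)"

definition test_functions :: "'a::euclidean_space set \<Rightarrow> ('a \<Rightarrow> real) set" where
  "test_functions \<Omega> = {\<phi>. smooth_on UNIV \<phi> \<and> compact (closure {x. \<phi> x \<noteq> 0}) \<and>
                                closure {x. \<phi> x \<noteq> 0} \<subseteq> \<Omega>}"

text \<open>H_0^1(Omega): closure of the test functions in the H^1 norm. An element is represented
  as a pair (u, g) of the function and its (weak) gradient.\<close>
definition H01 :: "'a::euclidean_space set \<Rightarrow> (('a \<Rightarrow> real) \<times> ('a \<Rightarrow> 'a)) set" where
  "H01 \<Omega> = {(u, g). u \<in> borel_measurable lebesgue \<and> g \<in> borel_measurable lebesgue \<and>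
     (\<exists>\<phi>::nat \<Rightarrow> 'a \<Rightarrow> real. (\<forall>n. \<phi> n \<in> test_functions \<Omega>) \<and>
        ((\<lambda>n. \<integral>\<^sup>+ x. ennreal ((\<phi> n x - u x)\<^sup>2 + (norm (grad (\<phi> n) x - g x))\<^sup>2) \<partial>lebesgue)
           \<longlonglongrightarrow> 0))}"

definition Lp_norm :: "'a::euclidean_space set \<Rightarrow> real \<Rightarrow> ('a \<Rightarrow> real) \<Rightarrow> real" where
  "Lp_norm \<Omega> p f = (\<integral>x\<in>\<Omega>. \<bar>f x\<bar> powr p \<partial>lebesgue) powr (1 / p)"

definition in_Lp :: "'a::euclidean_space set \<Rightarrow> real \<Rightarrow> ('a \<Rightarrow> real) \<Rightarrow> bool" where
  "in_Lp \<Omega> p f \<longleftrightarrow> f \<in> borel_measurable (lebesgue_on \<Omega>) \<and>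
      set_integrable lebesgue \<Omega> (\<lambda>x. \<bar>f x\<bar> powr p)"

definition Linf_norm :: "'a::euclidean_space set \<Rightarrow> ('a \<Rightarrow> real) \<Rightarrow> real" where
  "Linf_norm \<Omega> f = real_of_ereal (esssup (lebesgue_on \<Omega>) (\<lambda>x. ereal \<bar>f x\<bar>))"

definition in_Linf :: "'a::euclidean_space set \<Rightarrow> ('a \<Rightarrow> real) \<Rightarrow> bool" where
  "in_Linf \<Omega> f \<longleftrightarrow> f \<in> borel_measurable (lebesgue_on \<Omega>) \<and>
      esssup (lebesgue_on \<Omega>) (\<lambda>x. ereal \<bar>f x\<bar>) < \<infinity>"

definition W_norm :: "'a::euclidean_space set \<Rightarrow> ('a \<Rightarrow> 'a) \<Rightarrow> ('a \<Rightarrow> 'a) \<Rightarrow> real" where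
  "W_norm \<Omega> gu gv = sqrt (\<integral>x\<in>\<Omega>. (norm (gu x))\<^sup>2 + (norm (gv x))\<^sup>2 \<partial>lebesgue)"

definition sobolev_const :: "'a::euclidean_space set \<Rightarrow> real \<Rightarrow> real" where
  "sobolev_const \<Omega> i = Inf {S. \<forall>(u, g)\<in>H01 \<Omega>.
      Lp_norm \<Omega> i u \<le> S * sqrt (\<integral>x\<in>\<Omega>. (norm (g x))\<^sup>2 \<partial>lebesgue)}"

definition Phi :: "(real \<Rightarrow> real) \<Rightarrow> real \<Rightarrow> real" where
  "Phi \<phi> s = integral {0..s} \<phi>"

definition J_fun :: "'a::euclidean_space set \<Rightarrow> (real \<Rightarrow> real) \<Rightarrow> (real \<Rightarrow> real) \<Rightarrow>
    real \<Rightarrow> real \<Rightarrow> real \<Rightarrow> real \<Rightarrow> real \<Rightarrow>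
    ('a \<Rightarrow> real) \<Rightarrow> ('a \<Rightarrow> real) \<Rightarrow> ('a \<Rightarrow> real) \<Rightarrow> ('a \<Rightarrow> real) \<Rightarrow> ('a \<Rightarrow> real) \<Rightarrow>
    ('a \<Rightarrow> real) \<Rightarrow> ('a \<Rightarrow> 'a) \<Rightarrow> ('a \<Rightarrow> real) \<Rightarrow> ('a \<Rightarrow> 'a) \<Rightarrow> real" where
  "J_fun \<Omega> \<phi>1 \<phi>2 q \<alpha> \<beta> lam mu a b c h1 h2 u gu v gv =
     (\<integral>x\<in>\<Omega>. Phi \<phi>1 (((u x)\<^sup>2 + (norm (gu x))\<^sup>2) / 2) + Phi \<phi>2 (((v x)\<^sup>2 + (norm (gv x))\<^sup>2) / 2) \<partial>lebesgue)
     - (1 / q) * (\<integral>x\<in>\<Omega>. lam * a x * \<bar>u x\<bar> powr q + mu * c x * \<bar>v x\<bar> powr q \<partial>lebesgue)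
     - (1 / (\<alpha> + \<beta>)) * (\<integral>x\<in>\<Omega>. b x * \<bar>u x\<bar> powr \<alpha> * \<bar>v x\<bar> powr \<beta> \<partial>lebesgue)
     - (\<integral>x\<in>\<Omega>. h1 x * u x \<partial>lebesgue)
     - (\<integral>x\<in>\<Omega>. h2 x * v x \<partial>lebesgue)"

end

(*
  Put a smooth bump u, compactly supported in a box on which b > 0, into both components.
  Along the ray s (u, u), hypothesis (phi_1) bounds the Phi-terms of J by rho_1 s^2 times
  a constant and the remaining terms grow like s^q and s, while the coupling term is
  - s^(alpha+beta)/(alpha+beta) times a positive constant. Since alpha + beta > 2 it
  dominates, so J tends to -infinity along the ray, whereas the norm grows linearly in s.
  Hence far out on the ray both conclusions hold, whatever the value of t_{lambda,mu}.
*)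
theory Submission
  imports Defs "HOL-Computational_Algebra.Polynomial" "HOL-Real_Asymp.Real_Asymp"
begin

definition bump :: "real poly \<Rightarrow> nat \<Rightarrow> real \<Rightarrow> real" where
  "bump P k s = (if 0 < s \<and> s < 1
     then poly P s / (s * (1 - s)) ^ k * exp (- 1 / (s * (1 - s))) else 0)"

text \<open>With \<open>w = s (1 - s)\<close>, the derivative of \<open>P w^-k exp (-1/w)\<close> is
  \<open>(P' w^2 - k P w' w + P w') w^-(k+2) exp (-1/w)\<close>; so the bumps form a family closed under
  differentiation, which gives smoothness.\<close>
definition bump_deriv_poly :: "real poly \<Rightarrow> nat \<Rightarrow> real poly" where
  "bump_deriv_poly P k = pderiv P * [:0, 1, -1:]\<^sup>2 - smult (of_nat k) (P * [:1, -2:] * [:0, 1, -1:])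
     + P * [:1, -2:]"

lemma bump_eq_0: "s \<le> 0 \<or> 1 \<le> s \<Longrightarrow> bump P k s = 0"
  by (auto simp: bump_def)

lemma bump_pos: "0 < s \<Longrightarrow> s < 1 \<Longrightarrow> poly P s > 0 \<Longrightarrow> bump P k s > 0"
  by (simp add: bump_def)

lemma bump_tendsto_0:
  shows "(bump P k \<longlongrightarrow> 0) (at_right 0)" and "(bump P k \<longlongrightarrow> 0) (at_left 1)"
proof -
  define g where "g s = poly P s * ((1 / (s * (1 - s))) ^ k * exp (- (1 / (s * (1 - s)))))" for s :: real
  have exp_decay: "((\<lambda>z::real. z ^ k * exp (- z)) \<longlongrightarrow> 0) at_top"
    using tendsto_power_div_exp_0[of k] by (simp add: exp_minus field_simps)
  have "filterlim (\<lambda>s::real. 1 / (s * (1 - s))) at_top (at_right 0)"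
    and "filterlim (\<lambda>s::real. 1 / (s * (1 - s))) at_top (at_left 1)"
    by real_asymp+
  note decay = this[THEN filterlim_compose[OF exp_decay]]
  have "(g \<longlongrightarrow> poly P 0 * 0) (at_right 0)" and "(g \<longlongrightarrow> poly P 1 * 0) (at_left 1)"
    unfolding g_def by (intro tendsto_mult decay tendsto_intros)+
  moreover have "\<forall>\<^sub>F s in at_right 0. g s = bump P k s" and "\<forall>\<^sub>F s in at_left 1. g s = bump P k s"
    using eventually_at_right_real[of 0 "1::real"] eventually_at_left_real[of 0 "1::real"]
    by (auto elim!: eventually_mono simp: g_def bump_def field_simps power_one_over)
  ultimately show "(bump P k \<longlongrightarrow> 0) (at_right 0)" and "(bump P k \<longlongrightarrow> 0) (at_left 1)"
    by (auto intro: Lim_transform_eventually)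
qed

lemma bump_has_real_derivative_inside:
  assumes s: "0 < s" "s < 1"
  shows "(bump P k has_real_derivative bump (bump_deriv_poly P k) (k + 2) s) (at s)"
proof -
  define w where "w = s * (1 - s)"
  have w: "w > 0" using s by (simp add: w_def)
  have "((\<lambda>t. t * (1 - t)) has_real_derivative 1 - 2 * s) (at s)"
    by (auto intro!: derivative_eq_intros)
  from DERIV_inverse_fun[OF this]
  have dw: "((\<lambda>t. inverse (t * (1 - t))) has_real_derivative - ((1 - 2 * s) * inverse (w ^ 2))) (at s)"
    using s unfolding w_def by (simp add: power2_eq_square)
  have bump_w: "bump (bump_deriv_poly P k) (k + 2) s = (poly (pderiv P) s * w\<^sup>2
      - of_nat k * poly P s * (1 - 2 * s) * w + poly P s * (1 - 2 * s)) / w ^ (k + 2) * exp (- inverse w)"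
    using s unfolding bump_def bump_deriv_poly_def w_def
    by (simp add: algebra_simps power2_eq_square divide_inverse)
  have "(poly (pderiv P) s * inverse w ^ k + of_nat k * (- ((1 - 2 * s) * inverse (w\<^sup>2)) *
      inverse w ^ (k - Suc 0)) * poly P s) * exp (- inverse w) +
      exp (- inverse w) * - (- ((1 - 2 * s) * inverse (w\<^sup>2))) * (poly P s * inverse w ^ k)
      = bump (bump_deriv_poly P k) (k + 2) s"
    unfolding bump_w using w by (cases k) (simp_all add: field_simps power2_eq_square)
  then have "((\<lambda>t. poly P t * inverse (t * (1 - t)) ^ k * exp (- inverse (t * (1 - t)))) has_real_derivative
      bump (bump_deriv_poly P k) (k + 2) s) (at s)"
    using DERIV_mult[OF DERIV_mult[OF poly_DERIV[of P s] DERIV_power[OF dw, of k]]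
        DERIV_fun_exp[OF DERIV_minus[OF dw]]]
    unfolding w_def by (rule DERIV_cong[rotated])
  then show ?thesis
    by (rule has_field_derivative_transform_within_open[where S="{0<..<1}"])
       (use s in \<open>auto simp: bump_def divide_inverse power_inverse power_mult_distrib\<close>)
qed

text \<open>At the end points the difference quotients are themselves bumps, hence tend to 0.\<close>
lemma bump_has_real_derivative_0: "(bump P k has_real_derivative 0) (at 0)"
proof -
  have "((\<lambda>y. (bump P k y - bump P k 0) / (y - 0)) \<longlongrightarrow> 0) (at 0)"
  proof (rule filterlim_split_at)
    have "\<forall>\<^sub>F y in at_left (0::real). 0 = (bump P k y - bump P k 0) / (y - 0)"
      by (auto simp: eventually_at_filter bump_def)
    then show "((\<lambda>y. (bump P k y - bump P k 0) / (y - 0)) \<longlongrightarrow> 0) (at_left 0)"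
      by (rule Lim_transform_eventually[OF tendsto_const])
    have "\<forall>\<^sub>F y in at_right (0::real).
        bump (P * [:1, -1:]) (k + 1) y = (bump P k y - bump P k 0) / (y - 0)"
      using eventually_at_right_real[of 0 "1::real"]
      by (auto elim!: eventually_mono simp: bump_def field_simps)
    then show "((\<lambda>y. (bump P k y - bump P k 0) / (y - 0)) \<longlongrightarrow> 0) (at_right 0)"
      by (rule Lim_transform_eventually[OF bump_tendsto_0(1)])
  qed
  then show ?thesis by (simp add: has_field_derivative_iff)
qed

lemma bump_has_real_derivative_1: "(bump P k has_real_derivative 0) (at 1)"
proof -
  have "((\<lambda>y. (bump P k y - bump P k 1) / (y - 1)) \<longlongrightarrow> 0) (at 1)"
  proof (rule filterlim_split_at)
    have "\<forall>\<^sub>F y in at_left (1::real).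
        bump (P * [:0, -1:]) (k + 1) y = (bump P k y - bump P k 1) / (y - 1)"
      using eventually_at_left_real[of 0 "1::real"]
      by (auto elim!: eventually_mono simp: bump_def field_simps)
    then show "((\<lambda>y. (bump P k y - bump P k 1) / (y - 1)) \<longlongrightarrow> 0) (at_left 1)"
      by (rule Lim_transform_eventually[OF bump_tendsto_0(2)])
    have "\<forall>\<^sub>F y in at_right (1::real). 0 = (bump P k y - bump P k 1) / (y - 1)"
      by (auto simp: eventually_at_filter bump_def)
    then show "((\<lambda>y. (bump P k y - bump P k 1) / (y - 1)) \<longlongrightarrow> 0) (at_right 1)"
      by (rule Lim_transform_eventually[OF tendsto_const])
  qed
  then show ?thesis by (simp add: has_field_derivative_iff)
qed

lemma bump_has_real_derivative:
  "(bump P k has_real_derivative bump (bump_deriv_poly P k) (k + 2) s) (at s)"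
proof -
  consider "s < 0" | "s = 0" | "0 < s \<and> s < 1" | "s = 1" | "1 < s" by linarith
  then show ?thesis
  proof cases
    case 1
    show ?thesis
      by (rule has_field_derivative_transform_within_open[of "\<lambda>_. 0" _ _ "{..<0}"])
         (use 1 in \<open>auto simp: bump_def\<close>)
  next
    case 5
    show ?thesis
      by (rule has_field_derivative_transform_within_open[of "\<lambda>_. 0" _ _ "{1<..}"])
         (use 5 in \<open>auto simp: bump_def\<close>)
  qed (use bump_has_real_derivative_inside bump_has_real_derivative_0 bump_has_real_derivative_1
        in \<open>auto simp: bump_def\<close>)
qed

definition box_bump :: "'a::euclidean_space \<Rightarrow> 'a \<Rightarrow> real \<Rightarrow> ('a \<Rightarrow> real poly) \<Rightarrow> ('a \<Rightarrow> nat) \<Rightarrow> 'a \<Rightarrow> real"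
  where "box_bump a b C P k x = C * (\<Prod>i\<in>Basis. bump (P i) (k i) ((x \<bullet> i - a \<bullet> i) / (b \<bullet> i - a \<bullet> i)))"

definition box_bump_partial ::
    "'a::euclidean_space \<Rightarrow> 'a \<Rightarrow> real \<Rightarrow> ('a \<Rightarrow> real poly) \<Rightarrow> ('a \<Rightarrow> nat) \<Rightarrow> 'a \<Rightarrow> 'a \<Rightarrow> real"
  where "box_bump_partial a b C P k j = box_bump a b (C / (b \<bullet> j - a \<bullet> j))
     (P(j := bump_deriv_poly (P j) (k j))) (k(j := k j + 2))"

lemma box_bump_has_partial_derivative:
  fixes a b :: "'a::euclidean_space"
  assumes j: "j \<in> Basis"
  shows "((\<lambda>t. box_bump a b C P k (x + t *\<^sub>R j)) has_real_derivative
    box_bump_partial a b C P k j x) (at 0)"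
proof -
  define coord where "coord i y = (y - a \<bullet> i) / (b \<bullet> i - a \<bullet> i)" for i y
  define R where "R = (\<Prod>i\<in>Basis - {j}. bump (P i) (k i) (coord i (x \<bullet> i)))"
  have shift: "box_bump a b C P k (x + t *\<^sub>R j) = C * bump (P j) (k j) (coord j (x \<bullet> j + t)) * R" for t
  proof -
    have "(\<Prod>i\<in>Basis - {j}. bump (P i) (k i) (coord i ((x + t *\<^sub>R j) \<bullet> i))) = R"
      unfolding R_def using j by (intro prod.cong) (auto simp: inner_add_left inner_Basis)
    then show ?thesis
      using j by (simp add: box_bump_def coord_def prod.remove inner_add_left)
  qed
  have partial: "box_bump_partial a b C P k j x =
      C * (bump (bump_deriv_poly (P j) (k j)) (k j + 2) (coord j (x \<bullet> j + 0))
        * (1 / (b \<bullet> j - a \<bullet> j))) * R"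
    using j by (simp add: box_bump_partial_def box_bump_def coord_def R_def prod.remove)
  have "((\<lambda>t. bump (P j) (k j) (coord j (x \<bullet> j + t))) has_real_derivative
      bump (bump_deriv_poly (P j) (k j)) (k j + 2) (coord j (x \<bullet> j + 0))
        * (1 / (b \<bullet> j - a \<bullet> j))) (at 0)"
    unfolding coord_def
    by (rule DERIV_chain2[OF bump_has_real_derivative], rule DERIV_cdivide[where D=1])
       (auto intro!: derivative_eq_intros)
  from DERIV_cmult_right[OF DERIV_cmult[OF this, of C], of R]
  show ?thesis unfolding shift partial by simp
qed

lemma box_bump_differentiable: "box_bump a b C P k differentiable (at x)"
proof -
  have "((\<lambda>x. (x \<bullet> i - a \<bullet> i) / (b \<bullet> i - a \<bullet> i)) has_derivative
      (\<lambda>h. (h \<bullet> i - 0) / (b \<bullet> i - a \<bullet> i))) (at x)" for i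
    by (rule bounded_linear.has_derivative[OF bounded_linear_divide])
       (auto intro!: derivative_eq_intros)
  note factor = DERIV_compose_FDERIV[OF bump_has_real_derivative this]
  show ?thesis
    unfolding box_bump_def
    by (rule differentiableI, rule has_derivative_mult[OF has_derivative_const],
        rule has_derivative_prod, rule factor)
qed

lemma continuous_on_box_bump: "continuous_on S (box_bump a b C P k)"
  by (meson box_bump_differentiable continuous_at_imp_continuous_on
      differentiable_imp_continuous_within)

lemma smooth_on_box_bump:
  fixes a b :: "'a::euclidean_space"
  shows "smooth_on S (box_bump a b C P k)"
  unfolding smooth_on_def
proof (intro exI[of _ "{box_bump a b C P k | C P k. True}"] conjI ballI)
  fix g and i :: 'a assume "g \<in> {box_bump a b C P k | C P k. True}" and i: "i \<in> Basis"
  then obtain C P k where g: "g = box_bump a b C P k" by auto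
  show "\<exists>g'\<in>{box_bump a b C P k | C P k. True}. \<forall>x\<in>S.
      ((\<lambda>t. g (x + t *\<^sub>R i)) has_real_derivative g' x) (at 0)"
    using box_bump_has_partial_derivative[OF i] unfolding g box_bump_partial_def by blast
qed (auto simp: continuous_on_box_bump)

lemma grad_box_bump: "grad (box_bump a b C P k) x = (\<Sum>j\<in>Basis. box_bump_partial a b C P k j x *\<^sub>R j)"
proof -
  obtain D where D: "(box_bump a b C P k has_derivative D) (at x)"
    using box_bump_differentiable differentiable_def by blast
  have "D j = box_bump_partial a b C P k j x" if j: "j \<in> Basis" for j
  proof -
    have "((\<lambda>t::real. x + t *\<^sub>R j) has_derivative (\<lambda>t. t *\<^sub>R j)) (at 0)"
      by (auto intro!: derivative_eq_intros)
    from has_derivative_compose[OF this] D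
    have "((\<lambda>t. box_bump a b C P k (x + t *\<^sub>R j)) has_derivative (\<lambda>t. D (t *\<^sub>R j))) (at 0)"
      by simp
    moreover have "(\<lambda>t. D (t *\<^sub>R j)) = (\<lambda>t. D j * t)"
      using linear_scale[OF has_derivative_linear[OF D]] by (auto simp: mult.commute)
    ultimately have "((\<lambda>t. box_bump a b C P k (x + t *\<^sub>R j)) has_real_derivative D j) (at 0)"
      by (simp add: has_field_derivative_def)
    then show ?thesis using box_bump_has_partial_derivative[OF j] by (rule DERIV_unique)
  qed
  moreover have "frechet_derivative (box_bump a b C P k) (at x) = D"
    using frechet_derivative_at[OF D] by simp
  ultimately show ?thesis unfolding grad_def by simp
qed

lemma grad_box_bump_scale: "grad (box_bump a b C P k) x = C *\<^sub>R grad (box_bump a b 1 P k) x"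
  by (simp add: grad_box_bump scaleR_sum_right box_bump_partial_def box_bump_def)

lemma continuous_on_grad_box_bump: "continuous_on S (grad (box_bump a b C P k))"
  unfolding grad_box_bump[abs_def] box_bump_partial_def
  by (intro continuous_intros continuous_on_box_bump)

lemma box_bump_eq_0:
  assumes "\<forall>i\<in>Basis. a \<bullet> i < b \<bullet> i" and "x \<notin> box a b"
  shows "box_bump a b C P k x = 0"
proof -
  obtain i where i: "i \<in> Basis" "\<not> (a \<bullet> i < x \<bullet> i \<and> x \<bullet> i < b \<bullet> i)"
    using assms(2) by (auto simp: mem_box)
  then have "bump (P i) (k i) ((x \<bullet> i - a \<bullet> i) / (b \<bullet> i - a \<bullet> i)) = 0"
    using assms(1) by (intro bump_eq_0) (auto simp: field_simps)
  then show ?thesis unfolding box_bump_def using i(1) by (auto intro!: prod_zero)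
qed

lemma box_bump_pos:
  assumes "x \<in> box a b" and "C > 0"
    and "\<forall>i\<in>Basis. poly (P i) ((x \<bullet> i - a \<bullet> i) / (b \<bullet> i - a \<bullet> i)) > 0"
  shows "box_bump a b C P k x > 0"
proof -
  have "bump (P i) (k i) ((x \<bullet> i - a \<bullet> i) / (b \<bullet> i - a \<bullet> i)) > 0" if "i \<in> Basis" for i
    using assms that by (intro bump_pos) (auto simp: mem_box divide_less_eq)
  then show ?thesis unfolding box_bump_def using assms(2) by (simp add: prod_pos)
qed

lemma box_bump_in_H01:
  assumes ab: "\<forall>i\<in>Basis. a \<bullet> i < b \<bullet> i" and sub: "cbox a b \<subseteq> \<Omega>"
  shows "(box_bump a b C P k, grad (box_bump a b C P k)) \<in> H01 \<Omega>"
proof -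
  have supp: "{x. box_bump a b C P k x \<noteq> 0} \<subseteq> cbox a b"
    using box_bump_eq_0[OF ab] box_subset_cbox by blast
  then have "closure {x. box_bump a b C P k x \<noteq> 0} \<subseteq> \<Omega>"
    using sub closure_minimal[OF supp closed_cbox] by blast
  moreover have "compact (closure {x. box_bump a b C P k x \<noteq> 0})"
    using supp bounded_cbox bounded_subset compact_closure by blast
  ultimately have "box_bump a b C P k \<in> test_functions \<Omega>"
    unfolding test_functions_def by (simp add: smooth_on_box_bump)
  moreover have "box_bump a b C P k \<in> borel_measurable lebesgue"
    and "grad (box_bump a b C P k) \<in> borel_measurable lebesgue"
    by (auto intro!: borel_measurable_continuous_onI measurable_completion
        continuous_on_box_bump continuous_on_grad_box_bump)
  ultimately show ?thesis
    unfolding H01_def by (auto intro!: exI[of _ "\<lambda>_. box_bump a b C P k"])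
qed

lemma set_integral_eq_integral_cbox:
  fixes f :: "'a::euclidean_space \<Rightarrow> real"
  assumes "cbox l r \<subseteq> \<Omega>" and "continuous_on (cbox l r) f" and "\<And>x. x \<notin> cbox l r \<Longrightarrow> f x = 0"
  shows "(LINT x:\<Omega>|lebesgue. f x) = integral (cbox l r) f"
proof -
  have "(\<lambda>x. indicator \<Omega> x *\<^sub>R f x) = (\<lambda>x. indicator (cbox l r) x *\<^sub>R f x)"
    using assms by (auto simp: fun_eq_iff indicator_def)
  moreover have "set_integrable lebesgue (cbox l r) f"
    using absolutely_integrable_continuous[OF assms(2)] by simp
  ultimately show ?thesis
    using set_lebesgue_integral_eq_integral(2) unfolding set_lebesgue_integral_def by metis
qed

lemma integral_cbox_pos:
  fixes f :: "'a::euclidean_space \<Rightarrow> real"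
  assumes "continuous_on (cbox l r) f" and "box l r \<noteq> {}" and "\<And>x. x \<in> cbox l r \<Longrightarrow> f x \<ge> 0"
    and "x0 \<in> cbox l r" and "f x0 \<noteq> 0"
  shows "integral (cbox l r) f > 0"
  using integral_nonneg[OF integrable_continuous[OF assms(1)] assms(3)]
    integral_cbox_eq_0_iff[OF assms(1-3)] assms(4,5)
  by fastforce

lemma Phi_le:
  assumes "continuous_on {0..} \<phi>" and "\<forall>s\<ge>0. \<phi> s \<le> \<rho>" and "y \<ge> 0"
  shows "Phi \<phi> y \<le> \<rho> * y"
proof -
  have "\<phi> integrable_on {0..y}"
    by (rule integrable_continuous_real, rule continuous_on_subset[OF assms(1)]) auto
  then have "integral {0..y} \<phi> \<le> integral {0..y} (\<lambda>_. \<rho>)"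
    using assms by (intro integral_le) auto
  then show ?thesis using assms(3) by (simp add: Phi_def mult.commute)
qed

lemma continuous_on_Phi:
  assumes "continuous_on {0..} \<phi>"
  shows "continuous_on {0..M} (Phi \<phi>)"
proof -
  have "\<phi> integrable_on {0..M}"
    by (rule integrable_continuous_real, rule continuous_on_subset[OF assms]) auto
  then show ?thesis unfolding Phi_def[abs_def] by (rule indefinite_integral_continuous_1)
qed

lemma eventually_powr_sum_less:
  fixes A B D C p :: real
  assumes "e1 < p" "e2 < p" "e3 < p" "C > 0"
  shows "\<forall>\<^sub>F s in at_top. A * s powr e1 + B * s powr e2 + D * s powr e3 < C * s powr p"
proof -
  have "((\<lambda>s. A * s powr (e1 - p) + B * s powr (e2 - p) + D * s powr (e3 - p))
      \<longlongrightarrow> A * 0 + B * 0 + D * 0) at_top"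
    using assms by (intro tendsto_intros tendsto_neg_powr filterlim_ident) auto
  then have "\<forall>\<^sub>F s in at_top. A * s powr (e1 - p) + B * s powr (e2 - p) + D * s powr (e3 - p) < C"
    using assms(4) by (auto elim: order_tendstoD)
  then show ?thesis
    using eventually_gt_at_top[of 0]
  proof eventually_elim
    case (elim s)
    then have "(A * s powr (e1 - p) + B * s powr (e2 - p) + D * s powr (e3 - p)) * s powr p
        < C * s powr p"
      by simp
    then show ?case by (simp add: algebra_simps flip: powr_add)
  qed
qed

lemma continuous_on_abs_powr:
  fixes f :: "'a::topological_space \<Rightarrow> real"
  shows "continuous_on S f \<Longrightarrow> e > 0 \<Longrightarrow> continuous_on S (\<lambda>x. \<bar>f x\<bar> powr e)"
  by (intro continuous_on_powr' continuous_intros) auto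

lemmas integral_mult_const = integral_cmul[where 'b = real, unfolded real_scaleR_def]

context
  fixes \<Omega> :: "'a::euclidean_space set" and l r :: 'a and u :: "'a \<Rightarrow> real" and g :: "'a \<Rightarrow> 'a"
  assumes cbox_subset: "cbox l r \<subseteq> \<Omega>"
    and continuous_u: "continuous_on UNIV u" and continuous_g: "continuous_on UNIV g"
    and support: "\<And>x. x \<notin> cbox l r \<Longrightarrow> u x = 0 \<and> g x = 0"
begin

lemma set_integral_eq_integral_support:
  fixes f :: "'a \<Rightarrow> real"
  assumes "continuous_on (cbox l r) f" and "\<And>x. u x = 0 \<Longrightarrow> g x = 0 \<Longrightarrow> f x = 0"
  shows "(LINT x:\<Omega>|lebesgue. f x) = integral (cbox l r) f"
  by (rule set_integral_eq_integral_cbox[OF cbox_subset assms(1)]) (use assms(2) support in blast)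

lemma W_norm_scaled_diag:
  assumes "s \<ge> 0"
  shows "W_norm \<Omega> (\<lambda>x. s *\<^sub>R g x) (\<lambda>x. s *\<^sub>R g x)
    = s * sqrt (2 * integral (cbox l r) (\<lambda>x. (norm (g x))\<^sup>2))"
proof -
  have "(LINT x:\<Omega>|lebesgue. (norm (s *\<^sub>R g x))\<^sup>2 + (norm (s *\<^sub>R g x))\<^sup>2)
      = (LINT x:\<Omega>|lebesgue. 2 * s\<^sup>2 * (norm (g x))\<^sup>2)"
    by (simp add: power_mult_distrib)
  also have "\<dots> = integral (cbox l r) (\<lambda>x. 2 * s\<^sup>2 * (norm (g x))\<^sup>2)"
    by (intro set_integral_eq_integral_support continuous_intros
        continuous_on_subset[OF continuous_g]) auto
  finally show ?thesis
    using assms by (simp add: W_norm_def integral_mult_const real_sqrt_mult)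
qed

lemma set_integral_eq_mult_integral_support:
  fixes F G :: "'a \<Rightarrow> real"
  assumes "continuous_on (cbox l r) F" and "\<And>x. u x = 0 \<Longrightarrow> g x = 0 \<Longrightarrow> F x = 0"
    and "\<And>x. G x = \<kappa> * F x"
  shows "(LINT x:\<Omega>|lebesgue. G x) = \<kappa> * integral (cbox l r) F"
proof -
  have "(LINT x:\<Omega>|lebesgue. G x) = integral (cbox l r) (\<lambda>x. \<kappa> * F x)"
    unfolding assms(3)
    by (rule set_integral_eq_integral_support) (use assms(1,2) in \<open>auto intro!: continuous_intros\<close>)
  then show ?thesis by (simp add: integral_mult_const)
qed

lemma integral_Phi_scaled_le:
  fixes s :: real
  assumes phi: "continuous_on {0..} \<phi>1" "continuous_on {0..} \<phi>2" "\<forall>s\<ge>0. \<phi>1 s \<le> \<rho>" "\<forall>s\<ge>0. \<phi>2 s \<le> \<rho>"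
  defines "Q x \<equiv> ((s * u x)\<^sup>2 + (norm (s *\<^sub>R g x))\<^sup>2) / 2"
  shows "(LINT x:\<Omega>|lebesgue. Phi \<phi>1 (Q x) + Phi \<phi>2 (Q x))
    \<le> s\<^sup>2 * (\<rho> * integral (cbox l r) (\<lambda>x. (u x)\<^sup>2 + (norm (g x))\<^sup>2))"
proof -
  have Q: "Q x = s\<^sup>2 * ((u x)\<^sup>2 + (norm (g x))\<^sup>2) / 2" for x
    by (simp add: Q_def power_mult_distrib algebra_simps)
  have cont_Q: "continuous_on (cbox l r) Q"
    unfolding Q
    by (intro continuous_intros continuous_on_subset[OF continuous_u]
        continuous_on_subset[OF continuous_g]) auto
  obtain M where M: "\<forall>x\<in>cbox l r. \<bar>Q x\<bar> \<le> M"
    using compact_imp_bounded[OF compact_continuous_image[OF cont_Q compact_cbox]]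
    by (auto simp: bounded_real)
  have Q_range: "Q ` cbox l r \<subseteq> {0..M}"
    using M by (auto simp: Q)
  have cont_Phi: "continuous_on (cbox l r) (\<lambda>x. Phi \<phi>1 (Q x) + Phi \<phi>2 (Q x))"
    by (intro continuous_on_add continuous_on_compose2[OF continuous_on_Phi cont_Q Q_range] phi)
  have "(LINT x:\<Omega>|lebesgue. Phi \<phi>1 (Q x) + Phi \<phi>2 (Q x))
      = integral (cbox l r) (\<lambda>x. Phi \<phi>1 (Q x) + Phi \<phi>2 (Q x))"
    by (rule set_integral_eq_integral_support[OF cont_Phi]) (simp add: Q Phi_def)
  also have "\<dots> \<le> integral (cbox l r) (\<lambda>x. s\<^sup>2 * (\<rho> * ((u x)\<^sup>2 + (norm (g x))\<^sup>2)))"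
  proof (rule integral_le)
    show "(\<lambda>x. Phi \<phi>1 (Q x) + Phi \<phi>2 (Q x)) integrable_on cbox l r"
      using cont_Phi integrable_continuous by blast
    show "(\<lambda>x. s\<^sup>2 * (\<rho> * ((u x)\<^sup>2 + (norm (g x))\<^sup>2))) integrable_on cbox l r"
      by (intro integrable_continuous continuous_intros continuous_on_subset[OF continuous_u]
          continuous_on_subset[OF continuous_g]) auto
    fix x
    have "Q x \<ge> 0" by (simp add: Q_def)
    then have "Phi \<phi>1 (Q x) \<le> \<rho> * Q x" and "Phi \<phi>2 (Q x) \<le> \<rho> * Q x"
      using Phi_le phi by blast+
    then show "Phi \<phi>1 (Q x) + Phi \<phi>2 (Q x) \<le> s\<^sup>2 * (\<rho> * ((u x)\<^sup>2 + (norm (g x))\<^sup>2))"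
      unfolding Q by (simp add: algebra_simps)
  qed
  finally show ?thesis by (simp add: integral_mult_const)
qed

lemma J_fun_scaled_diag_le:
  assumes cont: "continuous_on \<Omega> a" "continuous_on \<Omega> b" "continuous_on \<Omega> c"
      "continuous_on \<Omega> h1" "continuous_on \<Omega> h2"
    and phi: "continuous_on {0..} \<phi>1" "continuous_on {0..} \<phi>2" "\<forall>s\<ge>0. \<phi>1 s \<le> \<rho>" "\<forall>s\<ge>0. \<phi>2 s \<le> \<rho>"
    and pos: "s > 0" "q > 0" "\<alpha> > 0" "\<beta> > 0"
  shows "J_fun \<Omega> \<phi>1 \<phi>2 q \<alpha> \<beta> lam mu a b c h1 h2
      (\<lambda>x. s * u x) (\<lambda>x. s *\<^sub>R g x) (\<lambda>x. s * u x) (\<lambda>x. s *\<^sub>R g x)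
    \<le> s\<^sup>2 * (\<rho> * integral (cbox l r) (\<lambda>x. (u x)\<^sup>2 + (norm (g x))\<^sup>2))
      - s powr q / q * integral (cbox l r) (\<lambda>x. lam * a x * \<bar>u x\<bar> powr q + mu * c x * \<bar>u x\<bar> powr q)
      - s powr (\<alpha> + \<beta>) / (\<alpha> + \<beta>) * integral (cbox l r) (\<lambda>x. b x * \<bar>u x\<bar> powr \<alpha> * \<bar>u x\<bar> powr \<beta>)
      - s * integral (cbox l r) (\<lambda>x. (h1 x + h2 x) * u x)"
proof -
  have cont_cbox: "continuous_on (cbox l r) a" "continuous_on (cbox l r) b" "continuous_on (cbox l r) c"
      "continuous_on (cbox l r) h1" "continuous_on (cbox l r) h2" "continuous_on (cbox l r) u"
    using cont continuous_on_subset[OF _ cbox_subset] continuous_on_subset[OF continuous_u] by blast+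
  have scale_powr: "\<bar>s * u x\<bar> powr e = s powr e * \<bar>u x\<bar> powr e" for x e
    using pos(1) by (simp add: abs_mult powr_mult)
  have concave_term: "(LINT x:\<Omega>|lebesgue. lam * a x * \<bar>s * u x\<bar> powr q + mu * c x * \<bar>s * u x\<bar> powr q)
      = s powr q * integral (cbox l r) (\<lambda>x. lam * a x * \<bar>u x\<bar> powr q + mu * c x * \<bar>u x\<bar> powr q)"
    using pos by (intro set_integral_eq_mult_integral_support continuous_intros cont_cbox
        continuous_on_abs_powr) (auto simp: scale_powr algebra_simps)
  have coupling_term: "(LINT x:\<Omega>|lebesgue. b x * \<bar>s * u x\<bar> powr \<alpha> * \<bar>s * u x\<bar> powr \<beta>)
      = s powr (\<alpha> + \<beta>) * integral (cbox l r) (\<lambda>x. b x * \<bar>u x\<bar> powr \<alpha> * \<bar>u x\<bar> powr \<beta>)"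
    using pos by (intro set_integral_eq_mult_integral_support continuous_intros cont_cbox
        continuous_on_abs_powr) (auto simp: scale_powr powr_add algebra_simps)
  have "(LINT x:\<Omega>|lebesgue. h1 x * (s * u x)) = s * integral (cbox l r) (\<lambda>x. h1 x * u x)"
    and "(LINT x:\<Omega>|lebesgue. h2 x * (s * u x)) = s * integral (cbox l r) (\<lambda>x. h2 x * u x)"
    by (intro set_integral_eq_mult_integral_support continuous_intros cont_cbox; simp)+
  then have linear_term: "(LINT x:\<Omega>|lebesgue. h1 x * (s * u x)) + (LINT x:\<Omega>|lebesgue. h2 x * (s * u x))
      = s * integral (cbox l r) (\<lambda>x. (h1 x + h2 x) * u x)"
    by (simp add: distrib_left distrib_right integral_add integrable_continuous continuous_intros
        cont_cbox)
  show ?thesis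
    using integral_Phi_scaled_le[OF phi, of s] concave_term coupling_term linear_term
    unfolding J_fun_def by (simp add: field_simps)
qed

lemma exists_scaling_W_norm_gt_J_fun_neg:
  assumes cont: "continuous_on \<Omega> a" "continuous_on \<Omega> b" "continuous_on \<Omega> c"
      "continuous_on \<Omega> h1" "continuous_on \<Omega> h2"
    and phi: "continuous_on {0..} \<phi>1" "continuous_on {0..} \<phi>2" "\<forall>s\<ge>0. \<phi>1 s \<le> \<rho>" "\<forall>s\<ge>0. \<phi>2 s \<le> \<rho>"
    and exponents: "1 < q" "q < 2" "2 < \<alpha> + \<beta>" "\<alpha> > 0" "\<beta> > 0"
    and b_pos: "\<And>x. x \<in> cbox l r \<Longrightarrow> b x > 0"
    and nonempty: "box l r \<noteq> {}"
    and u_nonzero: "x0 \<in> cbox l r" "u x0 \<noteq> 0"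
    and g_nonzero: "x1 \<in> cbox l r" "g x1 \<noteq> 0"
  shows "\<exists>s>0. W_norm \<Omega> (\<lambda>x. s *\<^sub>R g x) (\<lambda>x. s *\<^sub>R g x) > T \<and>
    J_fun \<Omega> \<phi>1 \<phi>2 q \<alpha> \<beta> lam mu a b c h1 h2
      (\<lambda>x. s * u x) (\<lambda>x. s *\<^sub>R g x) (\<lambda>x. s * u x) (\<lambda>x. s *\<^sub>R g x) < 0"
proof -
  define A where "A = \<rho> * integral (cbox l r) (\<lambda>x. (u x)\<^sup>2 + (norm (g x))\<^sup>2)"
  define B where "B = integral (cbox l r) (\<lambda>x. lam * a x * \<bar>u x\<bar> powr q + mu * c x * \<bar>u x\<bar> powr q)"
  define C where "C = integral (cbox l r) (\<lambda>x. b x * \<bar>u x\<bar> powr \<alpha> * \<bar>u x\<bar> powr \<beta>)"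
  define D where "D = integral (cbox l r) (\<lambda>x. (h1 x + h2 x) * u x)"
  define E where "E = integral (cbox l r) (\<lambda>x. (norm (g x))\<^sup>2)"
  have cont_cbox: "continuous_on (cbox l r) b" "continuous_on (cbox l r) u" "continuous_on (cbox l r) g"
    using cont(2) continuous_on_subset[OF _ cbox_subset] continuous_u continuous_g continuous_on_subset
    by blast+
  have "E > 0"
    unfolding E_def using g_nonzero
    by (intro integral_cbox_pos[OF _ nonempty] continuous_intros cont_cbox) auto
  have "continuous_on (cbox l r) (\<lambda>x. b x * \<bar>u x\<bar> powr \<alpha> * \<bar>u x\<bar> powr \<beta>)"
    using exponents by (intro continuous_on_mult cont_cbox continuous_on_abs_powr)
  then have "C > 0"
    unfolding C_def
  proof (rule integral_cbox_pos[OF _ nonempty _ u_nonzero(1)])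
    show "0 \<le> b x * \<bar>u x\<bar> powr \<alpha> * \<bar>u x\<bar> powr \<beta>" if "x \<in> cbox l r" for x
      using b_pos[OF that] by simp
    show "b x0 * \<bar>u x0\<bar> powr \<alpha> * \<bar>u x0\<bar> powr \<beta> \<noteq> 0"
      using b_pos[OF u_nonzero(1)] u_nonzero(2) by simp
  qed
  have "\<forall>\<^sub>F s in at_top. A * s powr 2 + (- B / q) * s powr q + (- D) * s powr 1
      < C / (\<alpha> + \<beta>) * s powr (\<alpha> + \<beta>)"
    using exponents \<open>C > 0\<close> by (intro eventually_powr_sum_less) auto
  moreover have "\<forall>\<^sub>F s in at_top. s > max 0 (T / sqrt (2 * E))"
    by (rule eventually_gt_at_top)
  ultimately obtain s where
    s: "A * s powr 2 + (- B / q) * s powr q + (- D) * s powr 1 < C / (\<alpha> + \<beta>) * s powr (\<alpha> + \<beta>)"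
      "s > max 0 (T / sqrt (2 * E))"
    using eventually_happens'[OF trivial_limit_at_top_linorder eventually_conj] by blast
  have "s * sqrt (2 * E) > T"
    using s(2) \<open>E > 0\<close> by (simp add: pos_divide_less_eq)
  moreover have "s powr 2 = s\<^sup>2"
    using s(2) by (simp add: powr_numeral)
  then have "J_fun \<Omega> \<phi>1 \<phi>2 q \<alpha> \<beta> lam mu a b c h1 h2
      (\<lambda>x. s * u x) (\<lambda>x. s *\<^sub>R g x) (\<lambda>x. s * u x) (\<lambda>x. s *\<^sub>R g x) < 0"
    using J_fun_scaled_diag_le[OF cont phi, of s q \<alpha> \<beta> lam mu] s exponents
    unfolding A_def B_def C_def D_def by (simp add: algebra_simps)
  ultimately show ?thesis
    using s(2) W_norm_scaled_diag[of s] unfolding E_def by auto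
qed

end

lemma exists_bump_supported_in_cbox:
  fixes a b :: "'a::euclidean_space"
  assumes ab: "\<forall>i\<in>Basis. a \<bullet> i < b \<bullet> i"
  obtains u :: "'a \<Rightarrow> real" and g :: "'a \<Rightarrow> 'a" and x0 x1 where
    "\<And>s \<Omega>. cbox a b \<subseteq> \<Omega> \<Longrightarrow> ((\<lambda>x. s * u x), (\<lambda>x. s *\<^sub>R g x)) \<in> H01 \<Omega>"
    "continuous_on UNIV u" "continuous_on UNIV g" "\<And>x. x \<notin> cbox a b \<Longrightarrow> u x = 0 \<and> g x = 0"
    "x0 \<in> cbox a b" "u x0 \<noteq> 0" "x1 \<in> cbox a b" "g x1 \<noteq> 0"
proof
  define P :: "'a \<Rightarrow> real poly" where "P = (\<lambda>_. 1)"
  define k :: "'a \<Rightarrow> nat" where "k = (\<lambda>_. 0)"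
  define u where "u = box_bump a b 1 P k"
  show "((\<lambda>x. s * u x), (\<lambda>x. s *\<^sub>R grad u x)) \<in> H01 \<Omega>" if "cbox a b \<subseteq> \<Omega>" for s \<Omega>
  proof -
    have "box_bump a b s P k = (\<lambda>x. s * u x)"
      by (simp add: u_def box_bump_def[abs_def])
    moreover have "grad (box_bump a b s P k) = (\<lambda>x. s *\<^sub>R grad u x)"
      unfolding u_def by (rule ext, rule grad_box_bump_scale)
    ultimately show ?thesis
      using box_bump_in_H01[OF ab that, of s P k] by simp
  qed
  show "continuous_on UNIV u" and "continuous_on UNIV (grad u)"
    unfolding u_def by (rule continuous_on_box_bump continuous_on_grad_box_bump)+
  show "u x = 0 \<and> grad u x = 0" if "x \<notin> cbox a b" for x
  proof -
    have "x \<notin> box a b" using that box_subset_cbox by blast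
    then show ?thesis by (simp add: u_def grad_box_bump box_bump_partial_def box_bump_eq_0[OF ab])
  qed
  have coord: "((a + t *\<^sub>R (b - a)) \<bullet> i - a \<bullet> i) / (b \<bullet> i - a \<bullet> i) = t" if "i \<in> Basis" for t i
  proof -
    have "b \<bullet> i - a \<bullet> i \<noteq> 0" using ab that by fastforce
    then show ?thesis by (simp add: inner_add_left inner_diff_left field_simps)
  qed
  have in_box: "a + t *\<^sub>R (b - a) \<in> box a b" if "0 < t" "t < 1" for t
  proof -
    have "0 < t * (b \<bullet> i - a \<bullet> i) \<and> t * (b \<bullet> i - a \<bullet> i) < b \<bullet> i - a \<bullet> i" if "i \<in> Basis" for i
      using ab that \<open>0 < t\<close> \<open>t < 1\<close> by simp
    then show ?thesis by (fastforce simp: mem_box inner_add_left inner_diff_left)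
  qed
  show "a + (1/2) *\<^sub>R (b - a) \<in> cbox a b" and "a + (1/4) *\<^sub>R (b - a) \<in> cbox a b"
    using in_box box_subset_cbox by force+
  have "u (a + (1/2) *\<^sub>R (b - a)) > 0"
    unfolding u_def by (rule box_bump_pos[OF in_box]) (auto simp: coord P_def)
  then show "u (a + (1/2) *\<^sub>R (b - a)) \<noteq> 0" by simp
  \<comment> \<open>At the centre of the box the gradient vanishes by symmetry, hence the quarter point.\<close>
  obtain j :: 'a where j: "j \<in> Basis" using nonempty_Basis by blast
  have "grad u (a + (1/4) *\<^sub>R (b - a)) \<bullet> j = box_bump_partial a b 1 P k j (a + (1/4) *\<^sub>R (b - a))"
    using j by (simp add: u_def grad_box_bump inner_sum_left inner_Basis if_distrib cong: if_cong)
  also have "\<dots> > 0"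
    unfolding box_bump_partial_def
    by (rule box_bump_pos[OF in_box]) (use ab j in \<open>auto simp: coord P_def k_def bump_deriv_poly_def\<close>)
  finally show "grad u (a + (1/4) *\<^sub>R (b - a)) \<noteq> 0" by auto
qed

theorem lemma3p3:
  fixes \<Omega> :: "'a::euclidean_space set"
    and \<alpha> \<beta> q lam mu \<rho>0 \<rho>1 :: real
    and a b c h1 h2 :: "'a \<Rightarrow> real"
    and \<phi>1 \<phi>2 :: "real \<Rightarrow> real"
  assumes dim: "DIM('a) \<ge> 3"
    and dom: "smooth_bounded_domain \<Omega>"
    and ab: "\<alpha> > 1" "\<beta> > 1"
    and q: "1 < q" "q < 2" "2 < \<alpha> + \<beta>"
    and crit: "\<alpha> + \<beta> < 2 * real DIM('a) / (real DIM('a) - 2)"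
    and lm: "lam > 0" "mu > 0"
    and cont: "continuous_on \<Omega> a" "continuous_on \<Omega> b" "continuous_on \<Omega> c"
              "continuous_on \<Omega> h1" "continuous_on \<Omega> h2"
    and aL: "in_Lp \<Omega> ((\<alpha> + \<beta>) / (\<alpha> + \<beta> - q)) a"
    and cL: "in_Lp \<Omega> ((\<alpha> + \<beta>) / (\<alpha> + \<beta> - q)) c"
    and hL: "in_Lp \<Omega> 2 h1" "in_Lp \<Omega> 2 h2"
    and phicont: "continuous_on {0..} \<phi>1" "continuous_on {0..} \<phi>2"
    and phi1: "0 < \<rho>0" "\<rho>0 \<le> \<rho>1"
      "\<forall>s\<ge>0. \<rho>0 \<le> \<phi>1 s \<and> \<phi>1 s \<le> \<rho>1" "\<forall>s\<ge>0. \<rho>0 \<le> \<phi>2 s \<and> \<phi>2 s \<le> \<rho>1"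
    and B: "in_Linf \<Omega> b" "\<exists>\<Omega>1. open \<Omega>1 \<and> \<Omega>1 \<noteq> {} \<and> \<Omega>1 \<subseteq> \<Omega> \<and> (\<forall>x\<in>\<Omega>1. b x > 0)"
  shows "let K = max (Lp_norm \<Omega> ((\<alpha> + \<beta>) / (\<alpha> + \<beta> - q)) a)
                     (Lp_norm \<Omega> ((\<alpha> + \<beta>) / (\<alpha> + \<beta> - q)) c);
             \<alpha>0 = ((2 - q) * (\<alpha> + \<beta>) * K) /
                  (q * (\<alpha> + \<beta> - 2) * Linf_norm \<Omega> b * sobolev_const \<Omega> (\<alpha> + \<beta>) powr (\<alpha> + \<beta> - q));
             t = (lam + mu) powr (1 / (\<alpha> + \<beta> - q)) * \<alpha>0 powr (1 / (\<alpha> + \<beta> - q))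
         in \<exists>\<omega>1 g1 \<omega>2 g2. (\<omega>1, g1) \<in> H01 \<Omega> \<and> (\<omega>2, g2) \<in> H01 \<Omega> \<and>
              W_norm \<Omega> g1 g2 > t \<and>
              J_fun \<Omega> \<phi>1 \<phi>2 q \<alpha> \<beta> lam mu a b c h1 h2 \<omega>1 g1 \<omega>2 g2 < 0"
proof -
  obtain \<Omega>1 where \<Omega>1: "open \<Omega>1" "\<Omega>1 \<noteq> {}" "\<Omega>1 \<subseteq> \<Omega>" "\<forall>x\<in>\<Omega>1. b x > 0"
    using B(2) by blast
  then obtain l r where lr: "cbox l r \<subseteq> \<Omega>1" "\<forall>i\<in>Basis. l \<bullet> i < r \<bullet> i"
    by (meson ex_in_conv open_contains_cbox)
  obtain u g x0 x1 where H01_ray: "\<And>s \<Omega>. cbox l r \<subseteq> \<Omega> \<Longrightarrow> ((\<lambda>x. s * u x), (\<lambda>x. s *\<^sub>R g x)) \<in> H01 \<Omega>"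
    and u: "continuous_on UNIV u" "continuous_on UNIV g" "\<And>x. x \<notin> cbox l r \<Longrightarrow> u x = 0 \<and> g x = 0"
      "x0 \<in> cbox l r" "u x0 \<noteq> 0" "x1 \<in> cbox l r" "g x1 \<noteq> 0"
    using exists_bump_supported_in_cbox[OF lr(2)] by blast
  have sub: "cbox l r \<subseteq> \<Omega>" and b_pos: "\<And>x. x \<in> cbox l r \<Longrightarrow> b x > 0"
    using lr(1) \<Omega>1(3,4) by auto
  have "box l r \<noteq> {}" using lr(2) by (simp add: box_ne_empty)
  moreover have "\<forall>s\<ge>0. \<phi>1 s \<le> \<rho>1" "\<forall>s\<ge>0. \<phi>2 s \<le> \<rho>1" "\<alpha> > 0" "\<beta> > 0"
    using phi1 ab by auto
  ultimately have "\<exists>s>0. W_norm \<Omega> (\<lambda>x. s *\<^sub>R g x) (\<lambda>x. s *\<^sub>R g x) > T \<and>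
      J_fun \<Omega> \<phi>1 \<phi>2 q \<alpha> \<beta> lam mu a b c h1 h2
      (\<lambda>x. s * u x) (\<lambda>x. s *\<^sub>R g x) (\<lambda>x. s * u x) (\<lambda>x. s *\<^sub>R g x) < 0"
    for T
    by (intro exists_scaling_W_norm_gt_J_fun_neg[OF sub u(1-3) cont phicont _ _ q _ _ b_pos _ u(4-7)])
  then show ?thesis
    unfolding Let_def using H01_ray[OF sub] by blast
qed

end
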